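(* $\mathcal{L}_{\mathsf{SAFA}}$ and $\mathcal{L}_{\mathsf{KRFA}}$ are incomparable: there is a data language accepted by some SAFA but by no $k$-register automaton (for any $k$), and there is a data language accepted by some $k$-register automaton but by no SAFA.
   Context: $D$ is a fixed countably infinite set of data values; for a finite alphabet $\Sigma$, data languages are subsets of $(\Sigma\times D)^*$. A set augmented finite automaton (SAFA) is a tuple $M=(Q,\Sigma\times D,q_0,F,H,\delta)$: $Q$ finite set of states, $q_0\in Q$ initial, $F\subseteq Q$ final, $H=\{h_1,\dots,h_m\}$ a finite collection of (names of) sets of data values, $\delta\subseteq Q\times\Sigma\times C\times OP\times Q$ with $C=\{p(h_i),\,!p(h_i)\}$, $OP=\{-\}\cup\{\mathsf{ins}(h_i)\}$. Configurations are $(q,\langle S_1,\dots,S_m\rangle)$, $S_i\subseteq D$ finite; initially state $q_0$ and all sets empty. On reading $(a,d)$, a transition $(q,a,\alpha,op,q')$ from the current state may be taken if $\alpha=p(h_i)$ and $d\in S_i$, or $\alpha=\,!p(h_i)$ and $d\notin S_i$; then the state becomes $q'$ and if $op=\mathsf{ins}(h_j)$, $d$ is added to $S_j$. A word is accepted if some run reads it entirely and ends in $F$. $\mathcal{L}_{\mathsf{SAFA}}$ is the class of data languages accepted by SAFA. A $k$-register automaton is a tuple $(Q,\Sigma,\delta,\tau_0,U,q_0,F)$ with finite state set $Q$, initial state $q_0$, final states $F\subseteq Q$, initial register assignment $\tau_0:\{1,\dots,k\}\to D\cup\{\bot\}$ (the non-$\bot$ values being pairwise distinct; $\bot$ means empty),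 a partial update function $U:Q\times\Sigma\to\{1,\dots,k\}$ and transition relation $\delta\subseteq Q\times\Sigma\times\{1,\dots,k\}\times Q$. Reading $(a,d)$ in state $q$: if $d$ equals the content of some register $i$, the automaton takes a transition $(q,a,i,q')\in\delta$ (halting without consuming if none exists); if $d$ is in no register, then if $U(q,a)$ is undefined it halts, otherwise $d$ is written into register $U(q,a)$ and a transition $(q,a,U(q,a),q')\in\delta$ is taken (halting if none). A word is accepted if it is entirely consumed and the automaton ends in $F$. $\mathcal{L}_{\mathsf{KRFA}}$ is the class of data languages accepted by $k$-register automata for some $k\geq 1$. *)

theory Defs
  imports "HOL-Library.Countable_Set"
begin

datatype cond = PIn nat | NotIn nat
datatype setop = NoOp | Ins nat

record safa =
  s_states :: "nat set"
  s_alpha  :: "nat set"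
  s_init   :: nat
  s_final  :: "nat set"
  s_nsets  :: nat                         (* m: the sets are h_1, ..., h_m *)
  s_trans  :: "(nat \<times> nat \<times> cond \<times> setop \<times> nat) set"

definition cond_ok :: "nat \<Rightarrow> cond \<Rightarrow> bool" where
  "cond_ok m c = (case c of PIn i \<Rightarrow> i \<in> {1..m} | NotIn i \<Rightarrow> i \<in> {1..m})"

definition op_ok :: "nat \<Rightarrow> setop \<Rightarrow> bool" where
  "op_ok m opr = (case opr of NoOp \<Rightarrow> True | Ins i \<Rightarrow> i \<in> {1..m})"

definition safa_wf :: "safa \<Rightarrow> bool" where
  "safa_wf M \<longleftrightarrow> finite (s_states M) \<and> finite (s_alpha M) \<and>
     s_init M \<in> s_states M \<and> s_final M \<subseteq> s_states M \<and>
     (\<forall>(q,a,c,opr,q') \<in> s_trans M. q \<in> s_states M \<and> a \<in> s_alpha M \<and>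
         cond_ok (s_nsets M) c \<and> op_ok (s_nsets M) opr \<and> q' \<in> s_states M)"

definition cond_holds :: "cond \<Rightarrow> 'd \<Rightarrow> (nat \<Rightarrow> 'd set) \<Rightarrow> bool" where
  "cond_holds c d S = (case c of PIn i \<Rightarrow> d \<in> S i | NotIn i \<Rightarrow> d \<notin> S i)"

definition apply_op :: "setop \<Rightarrow> 'd \<Rightarrow> (nat \<Rightarrow> 'd set) \<Rightarrow> (nat \<Rightarrow> 'd set)" where
  "apply_op opr d S = (case opr of NoOp \<Rightarrow> S | Ins j \<Rightarrow> S(j := insert d (S j)))"

definition safa_step :: "safa \<Rightarrow> nat \<times> (nat \<Rightarrow> 'd set) \<Rightarrow> nat \<times> 'd \<Rightarrow> nat \<times> (nat \<Rightarrow> 'd set) \<Rightarrow> bool" where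
  "safa_step M cfg x cfg' \<longleftrightarrow>
     (\<exists>c opr. (fst cfg, fst x, c, opr, fst cfg') \<in> s_trans M \<and>
            cond_holds c (snd x) (snd cfg) \<and> snd cfg' = apply_op opr (snd x) (snd cfg))"

inductive safa_run :: "safa \<Rightarrow> nat \<times> (nat \<Rightarrow> 'd set) \<Rightarrow> (nat \<times> 'd) list \<Rightarrow> nat \<times> (nat \<Rightarrow> 'd set) \<Rightarrow> bool"
  for M where
  safa_nil: "safa_run M cfg [] cfg"
| safa_cons: "safa_step M cfg x cfg' \<Longrightarrow> safa_run M cfg' w cfg'' \<Longrightarrow> safa_run M cfg (x # w) cfg''"

definition safa_lang :: "safa \<Rightarrow> (nat \<times> 'd) list set" where
  "safa_lang M = {w. \<exists>cfg. safa_run M (s_init M, \<lambda>_. {}) w cfg \<and> fst cfg \<in> s_final M}"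

definition L_SAFA :: "(nat \<times> 'd) list set set" where
  "L_SAFA = {L. \<exists>M. safa_wf M \<and> L = safa_lang M}"

record krfa =
  r_k      :: nat
  r_states :: "nat set"
  r_alpha  :: "nat set"
  r_trans  :: "(nat \<times> nat \<times> nat \<times> nat) set"
  r_upd    :: "nat \<Rightarrow> nat \<Rightarrow> nat option"
  r_init   :: nat
  r_final  :: "nat set"

definition krfa_wf :: "krfa \<Rightarrow> (nat \<Rightarrow> 'd option) \<Rightarrow> bool" where
  "krfa_wf A \<tau>0 \<longleftrightarrow> r_k A \<ge> 1 \<and> finite (r_states A) \<and> finite (r_alpha A) \<and>
     r_init A \<in> r_states A \<and> r_final A \<subseteq> r_states A \<and>
     (\<forall>(q,a,i,q') \<in> r_trans A. q \<in> r_states A \<and> a \<in> r_alpha A \<and> i \<in> {1..r_k A} \<and> q' \<in> r_states A) \<and>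
     (\<forall>q a j. r_upd A q a = Some j \<longrightarrow> q \<in> r_states A \<and> a \<in> r_alpha A \<and> j \<in> {1..r_k A}) \<and>
     (\<forall>i. i \<notin> {1..r_k A} \<longrightarrow> \<tau>0 i = None) \<and>
     (\<forall>i\<in>{1..r_k A}. \<forall>j\<in>{1..r_k A}. i \<noteq> j \<longrightarrow> \<tau>0 i \<noteq> None \<longrightarrow> \<tau>0 i \<noteq> \<tau>0 j)"

definition krfa_step :: "krfa \<Rightarrow> nat \<times> (nat \<Rightarrow> 'd option) \<Rightarrow> nat \<times> 'd \<Rightarrow> nat \<times> (nat \<Rightarrow> 'd option) \<Rightarrow> bool" where
  "krfa_step A cfg x cfg' \<longleftrightarrow>
     (let q = fst cfg; \<tau> = snd cfg; a = fst x; d = snd x in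
      if (\<exists>i\<in>{1..r_k A}. \<tau> i = Some d)
      then (\<exists>i\<in>{1..r_k A}. \<tau> i = Some d \<and> (q, a, i, fst cfg') \<in> r_trans A \<and> snd cfg' = \<tau>)
      else (\<exists>j. r_upd A q a = Some j \<and> (q, a, j, fst cfg') \<in> r_trans A \<and>
                snd cfg' = \<tau>(j := Some d)))"

inductive krfa_run :: "krfa \<Rightarrow> nat \<times> (nat \<Rightarrow> 'd option) \<Rightarrow> (nat \<times> 'd) list \<Rightarrow> nat \<times> (nat \<Rightarrow> 'd option) \<Rightarrow> bool"
  for A where
  krfa_nil: "krfa_run A cfg [] cfg"
| krfa_cons: "krfa_step A cfg x cfg' \<Longrightarrow> krfa_run A cfg' w cfg'' \<Longrightarrow> krfa_run A cfg (x # w) cfg''"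

definition krfa_lang :: "krfa \<Rightarrow> (nat \<Rightarrow> 'd option) \<Rightarrow> (nat \<times> 'd) list set" where
  "krfa_lang A \<tau>0 = {w. \<exists>cfg. krfa_run A (r_init A, \<tau>0) w cfg \<and> fst cfg \<in> r_final A}"

definition L_KRFA :: "(nat \<times> 'd) list set set" where
  "L_KRFA = {L. \<exists>A \<tau>0. krfa_wf A \<tau>0 \<and> L = krfa_lang A \<tau>0}"

end

theory Submission
  imports Defs
begin

text \<open>A SAFA can store every datum it has read, so it accepts the words whose data are pairwise
distinct. A \<open>k\<close>-register automaton holds at most \<open>k\<close> data at a time: after reading \<open>k + 1\<close>
distinct data it has forgotten one of them, and it treats that datum exactly like a fresh one,
so it also accepts a word with a repetition. Conversely, the registers of a register automaton
may be preloaded with a datum, whereas the sets of a SAFA start empty; hence a SAFA cannot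
accept the one-letter word carrying a particular datum without accepting it with every datum.\<close>

definition held_data :: "krfa \<Rightarrow> (nat \<Rightarrow> 'd option) \<Rightarrow> 'd set" where
  "held_data A \<tau> = {d. \<exists>i\<in>{1..r_k A}. \<tau> i = Some d}"

lemma held_data_subset_image: "held_data A \<tau> \<subseteq> (the \<circ> \<tau>) ` {1..r_k A}"
  unfolding held_data_def by force

lemma finite_held_data: "finite (held_data A \<tau>)"
  by (rule finite_subset[OF held_data_subset_image]) simp

lemma card_held_data_le: "card (held_data A \<tau>) \<le> r_k A"
proof -
  have "card (held_data A \<tau>) \<le> card ((the \<circ> \<tau>) ` {1..r_k A})"
    by (intro card_mono held_data_subset_image) simp
  also have "\<dots> \<le> r_k A"
    using card_image_le[of "{1..r_k A}" "the \<circ> \<tau>"] by simp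
  finally show ?thesis .
qed

lemma krfa_run_snocE:
  assumes "krfa_run A c (w @ [x]) c''"
  obtains c' where "krfa_run A c w c'" "krfa_step A c' x c''"
  using assms
proof (induction w arbitrary: c)
  case Nil
  then show ?case by (auto elim!: krfa_run.cases intro: krfa_run.intros)
next
  case (Cons y w)
  from Cons.prems(2) obtain c1 where "krfa_step A c y c1" "krfa_run A c1 (w @ [x]) c''"
    by (auto elim: krfa_run.cases)
  with Cons.IH Cons.prems(1) show ?case by (blast intro: krfa_run.intros)
qed

lemma krfa_run_snoc:
  "krfa_run A c w c' \<Longrightarrow> krfa_step A c' x c'' \<Longrightarrow> krfa_run A c (w @ [x]) c''"
  by (induction rule: krfa_run.induct) (auto intro: krfa_run.intros)

lemma krfa_step_held_data:
  "krfa_step A c x c' \<Longrightarrow> held_data A (snd c') \<subseteq> insert (snd x) (held_data A (snd c))"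
  unfolding krfa_step_def held_data_def Let_def by (auto split: if_splits)

lemma krfa_run_held_data:
  "krfa_run A c w c' \<Longrightarrow> held_data A (snd c') \<subseteq> held_data A (snd c) \<union> snd ` set w"
  by (induction rule: krfa_run.induct) (fastforce dest: krfa_step_held_data)+

lemma krfa_step_fresh_datum:
  assumes "krfa_step A c (a, e) c'"
    and "e \<notin> held_data A (snd c)" and "d \<notin> held_data A (snd c)"
  shows "\<exists>\<tau>'. krfa_step A c (a, d) (fst c', \<tau>')"
proof -
  obtain j where "r_upd A (fst c) a = Some j" "(fst c, a, j, fst c') \<in> r_trans A"
    using assms(1,2) unfolding krfa_step_def held_data_def Let_def by (auto split: if_splits)
  then have "krfa_step A c (a, d) (fst c', (snd c)(j := Some d))"
    using assms(3) unfolding krfa_step_def held_data_def Let_def by auto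
  then show ?thesis by blast
qed

lemma krfa_lang_fresh_datum_replaceable:
  assumes accepted: "w @ [(a, e)] \<in> krfa_lang A \<tau>0"
    and fresh: "e \<notin> held_data A \<tau>0" "e \<notin> snd ` set w"
    and D: "finite D" "r_k A < card D"
  shows "\<exists>d\<in>D. w @ [(a, d)] \<in> krfa_lang A \<tau>0"
proof -
  obtain cfg where run: "krfa_run A (r_init A, \<tau>0) (w @ [(a, e)]) cfg"
    and final: "fst cfg \<in> r_final A"
    using accepted unfolding krfa_lang_def by blast
  obtain c' where run_w: "krfa_run A (r_init A, \<tau>0) w c'"
    and last_step: "krfa_step A c' (a, e) cfg"
    using run by (rule krfa_run_snocE)
  have held: "held_data A (snd c') \<subseteq> held_data A \<tau>0 \<union> snd ` set w"
    using krfa_run_held_data[OF run_w] by simp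
  have "\<not> D \<subseteq> held_data A (snd c')"
  proof
    assume "D \<subseteq> held_data A (snd c')"
    then have "card D \<le> r_k A"
      using card_mono[OF finite_held_data] card_held_data_le le_trans by blast
    with D(2) show False by simp
  qed
  then obtain d where "d \<in> D" "d \<notin> held_data A (snd c')" by blast
  moreover obtain \<tau>' where "krfa_step A c' (a, d) (fst cfg, \<tau>')"
    using krfa_step_fresh_datum[OF last_step] held fresh \<open>d \<notin> held_data A (snd c')\<close> by blast
  then have "krfa_run A (r_init A, \<tau>0) (w @ [(a, d)]) (fst cfg, \<tau>')"
    by (rule krfa_run_snoc[OF run_w])
  then have "w @ [(a, d)] \<in> krfa_lang A \<tau>0"
    using final unfolding krfa_lang_def by auto
  ultimately show ?thesis by blast
qed

definition distinct_data_words :: "nat \<Rightarrow> (nat \<times> 'd) list set" where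
  "distinct_data_words a = {w. (\<forall>x\<in>set w. fst x = a) \<and> distinct (map snd w)}"

lemma distinct_data_words_not_L_KRFA:
  assumes "infinite (UNIV :: 'd set)"
  shows "(distinct_data_words a :: (nat \<times> 'd) list set) \<notin> L_KRFA"
proof
  assume "(distinct_data_words a :: (nat \<times> 'd) list set) \<in> L_KRFA"
  then obtain A and \<tau>0 :: "nat \<Rightarrow> 'd option"
    where L: "distinct_data_words a = krfa_lang A \<tau>0"
    unfolding L_KRFA_def by blast
  obtain D :: "'d set" where D: "finite D" "card D = Suc (r_k A)"
    using infinite_arbitrarily_large[OF assms] by blast
  obtain ds where ds: "set ds = D" "distinct ds"
    using finite_distinct_list[OF D(1)] by blast
  have "finite (D \<union> held_data A \<tau>0)"
    using D(1) finite_held_data by simp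
  then obtain e where e: "e \<notin> D \<union> held_data A \<tau>0"
    using ex_new_if_finite[OF assms] by blast
  define w where "w = map (Pair a) ds"
  have map_snd_w: "map snd w = ds"
    unfolding w_def by (simp add: comp_def)
  have "w @ [(a, e)] \<in> distinct_data_words a"
    using ds e map_snd_w unfolding distinct_data_words_def by (auto simp: w_def)
  moreover have "snd ` set w = D"
    using ds map_snd_w by (metis set_map)
  ultimately have "\<exists>d\<in>D. w @ [(a, d)] \<in> krfa_lang A \<tau>0"
    using L e D by (intro krfa_lang_fresh_datum_replaceable) auto
  then obtain d where "d \<in> D" "w @ [(a, d)] \<in> distinct_data_words a"
    using L by blast
  moreover have "d \<in> set (map snd w)"
    using \<open>d \<in> D\<close> ds map_snd_w by simp
  ultimately show False
    unfolding distinct_data_words_def by auto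
qed

lemma safa_lang_in_L_SAFA: "safa_wf M \<Longrightarrow> safa_lang M \<in> L_SAFA"
  unfolding L_SAFA_def by blast

definition distinct_data_safa :: "nat \<Rightarrow> safa" where
  "distinct_data_safa a = \<lparr>s_states = {0}, s_alpha = {a}, s_init = 0, s_final = {0}, s_nsets = 1,
     s_trans = {(0, a, NotIn 1, Ins 1, 0)}\<rparr>"

lemma distinct_data_safa_wf: "safa_wf (distinct_data_safa a)"
  by (simp add: safa_wf_def distinct_data_safa_def cond_ok_def op_ok_def)

lemma distinct_data_safa_runD:
  assumes "safa_run (distinct_data_safa a) cfg w cfg'" "fst cfg = 0"
  shows "fst cfg' = 0 \<and> (\<forall>x\<in>set w. fst x = a \<and> snd x \<notin> snd cfg 1) \<and> distinct (map snd w)"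
  using assms
proof (induction rule: safa_run.induct)
  case (safa_nil cfg)
  then show ?case by simp
next
  case (safa_cons cfg x cfg' w cfg'')
  from safa_cons.hyps(1) safa_cons.prems have "fst cfg' = 0" "fst x = a"
    "snd x \<notin> snd cfg 1" "snd cfg' 1 = insert (snd x) (snd cfg 1)"
    by (auto simp: safa_step_def distinct_data_safa_def cond_holds_def apply_op_def)
  with safa_cons.IH show ?case by auto
qed

lemma distinct_data_safa_run_exists:
  assumes "\<forall>x\<in>set w. fst x = a \<and> snd x \<notin> S 1" "distinct (map snd w)"
  shows "\<exists>S'. safa_run (distinct_data_safa a) (0, S) w (0, S')"
  using assms
proof (induction w arbitrary: S)
  case Nil
  then show ?case by (auto intro: safa_run.intros)
next
  case (Cons x w)
  let ?S = "S(1 := insert (snd x) (S 1))"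
  have "\<forall>y\<in>set w. fst y = a \<and> snd y \<notin> ?S 1" "distinct (map snd w)"
    using Cons.prems by auto
  then obtain S' where "safa_run (distinct_data_safa a) (0, ?S) w (0, S')"
    using Cons.IH by blast
  moreover have "safa_step (distinct_data_safa a) (0, S) x (0, ?S)"
    using Cons.prems
    by (auto simp: safa_step_def distinct_data_safa_def cond_holds_def apply_op_def)
  ultimately show ?case by (blast intro: safa_run.intros)
qed

lemma safa_lang_distinct_data_safa: "safa_lang (distinct_data_safa a) = distinct_data_words a"
proof (intro set_eqI iffI)
  fix w :: "(nat \<times> 'd) list"
  assume "w \<in> safa_lang (distinct_data_safa a)"
  then obtain cfg where "safa_run (distinct_data_safa a) (0, \<lambda>_. {}) w cfg"
    unfolding safa_lang_def by (auto simp: distinct_data_safa_def)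
  from distinct_data_safa_runD[OF this]
  show "w \<in> distinct_data_words a"
    unfolding distinct_data_words_def by simp
next
  fix w :: "(nat \<times> 'd) list"
  assume "w \<in> distinct_data_words a"
  then obtain S' where "safa_run (distinct_data_safa a) (0, \<lambda>_. {}) w (0, S')"
    using distinct_data_safa_run_exists[of w a "\<lambda>_. {}"]
    unfolding distinct_data_words_def by auto
  then show "w \<in> safa_lang (distinct_data_safa a)"
    unfolding safa_lang_def by (auto simp: distinct_data_safa_def)
qed

lemma safa_lang_singleton_data_independent:
  assumes "[(a, d)] \<in> safa_lang M"
  shows "[(a, d')] \<in> safa_lang M"
proof -
  obtain cfg where "safa_run M (s_init M, \<lambda>_. {}) [(a, d)] cfg" and final: "fst cfg \<in> s_final M"
    using assms unfolding safa_lang_def by blast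
  then have "safa_step M (s_init M, \<lambda>_. {}) (a, d) cfg"
    by (auto elim!: safa_run.cases)
  then obtain c opr where t: "(s_init M, a, c, opr, fst cfg) \<in> s_trans M"
    and "cond_holds c d (\<lambda>_. {})"
    unfolding safa_step_def by auto
  then have "cond_holds c d' (\<lambda>_. {})"
    by (cases c) (auto simp: cond_holds_def)
  with t have "safa_step M (s_init M, \<lambda>_. {}) (a, d') (fst cfg, apply_op opr d' (\<lambda>_. {}))"
    unfolding safa_step_def by auto
  then show ?thesis
    using final unfolding safa_lang_def by (force intro: safa_run.intros)
qed

lemma L_SAFA_singleton_data_independent:
  assumes "L \<in> L_SAFA" and "[(a, d)] \<in> L"
  shows "[(a, d')] \<in> L"
proof -
  obtain M where L: "L = safa_lang M"
    using assms(1) unfolding L_SAFA_def by blast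
  show ?thesis
    using safa_lang_singleton_data_independent[of a d M d'] assms(2) unfolding L by blast
qed

lemma krfa_lang_in_L_KRFA: "krfa_wf A \<tau>0 \<Longrightarrow> krfa_lang A \<tau>0 \<in> L_KRFA"
  unfolding L_KRFA_def by blast

definition datum_test_krfa :: krfa where
  "datum_test_krfa = \<lparr>r_k = 1, r_states = {0, 1}, r_alpha = {0}, r_trans = {(0, 0, 1, 1)},
     r_upd = (\<lambda>_ _. None), r_init = 0, r_final = {1}\<rparr>"

definition preloaded :: "'d \<Rightarrow> nat \<Rightarrow> 'd option" where
  "preloaded c = (\<lambda>i. if i = 1 then Some c else None)"

lemma datum_test_krfa_wf: "krfa_wf datum_test_krfa (preloaded c)"
  unfolding krfa_wf_def datum_test_krfa_def preloaded_def by auto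

lemma datum_test_krfa_accepts: "[(0, c)] \<in> krfa_lang datum_test_krfa (preloaded c)"
proof -
  have "krfa_step datum_test_krfa (0, preloaded c) (0, c) (1, preloaded c)"
    unfolding krfa_step_def datum_test_krfa_def preloaded_def by auto
  then show ?thesis
    unfolding krfa_lang_def by (auto simp: datum_test_krfa_def intro!: krfa_run.intros)
qed

lemma datum_test_krfa_rejects:
  assumes "d \<noteq> c"
  shows "[(0, d)] \<notin> krfa_lang datum_test_krfa (preloaded c)"
proof
  assume "[(0, d)] \<in> krfa_lang datum_test_krfa (preloaded c)"
  then obtain cfg where "krfa_step datum_test_krfa (0, preloaded c) (0, d) cfg"
    unfolding krfa_lang_def by (auto simp: datum_test_krfa_def elim!: krfa_run.cases)
  then show False
    using assms unfolding krfa_step_def datum_test_krfa_def preloaded_def by auto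
qed

theorem theorem15:
  assumes "infinite (UNIV :: 'd set)" and "countable (UNIV :: 'd set)"
  shows "(\<exists>L :: (nat \<times> 'd) list set. L \<in> L_SAFA \<and> L \<notin> L_KRFA) \<and>
         (\<exists>L :: (nat \<times> 'd) list set. L \<in> L_KRFA \<and> L \<notin> L_SAFA)"
proof
  show "\<exists>L :: (nat \<times> 'd) list set. L \<in> L_SAFA \<and> L \<notin> L_KRFA"
  proof (intro exI conjI)
    show "(distinct_data_words 0 :: (nat \<times> 'd) list set) \<in> L_SAFA"
      using safa_lang_in_L_SAFA[OF distinct_data_safa_wf, of 0]
      by (simp only: safa_lang_distinct_data_safa)
    show "(distinct_data_words 0 :: (nat \<times> 'd) list set) \<notin> L_KRFA"
      by (rule distinct_data_words_not_L_KRFA[OF assms(1)])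
  qed
next
  fix c :: 'd
  obtain d where "d \<noteq> c"
    using ex_new_if_finite[OF assms(1), of "{c}"] by auto
  show "\<exists>L :: (nat \<times> 'd) list set. L \<in> L_KRFA \<and> L \<notin> L_SAFA"
  proof (intro exI conjI)
    show "krfa_lang datum_test_krfa (preloaded c) \<in> L_KRFA"
      by (rule krfa_lang_in_L_KRFA[OF datum_test_krfa_wf])
    show "krfa_lang datum_test_krfa (preloaded c) \<notin> L_SAFA"
      using L_SAFA_singleton_data_independent[OF _ datum_test_krfa_accepts, where d' = d]
        datum_test_krfa_rejects[OF \<open>d \<noteq> c\<close>] by blast
  qed
qed

end
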